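(* Let $\gamma\ge0$ be an integer and let $\xi=\{\xi^m\}$ with $\xi^m=K_\gamma\mathbf{1}(m=\gamma)$, $K_\gamma=\pm2\omega_\gamma\sqrt{\frac{2}{3C_{\gamma\gamma\gamma\gamma}}}$. Then the non-degeneracy condition $\ker(d\mathcal{M}(\xi))=\{0\}$ (for $d\mathcal{M}(\xi)$ acting on $l^2_{s+3}$) is equivalent to: $\omega_m^2C_{\gamma\gamma\gamma\gamma}-2\omega_\gamma^2C_{\gamma\gamma mm}\ne0$ for all $m\ge2\gamma+1$, and $D_{\gamma n}\ne0$ for all $n\in\{0,1,\dots,\gamma-1\}$, where $$D_{\gamma n}=\left[\omega_n^2C_{\gamma\gamma\gamma\gamma}-2\omega_\gamma^2C_{\gamma\gamma nn}\right]\left[\omega_{2\gamma-n}^2C_{\gamma\gamma\gamma\gamma}-2\omega_\gamma^2C_{\gamma,\gamma,2\gamma-n,2\gamma-n}\right]-\left[\omega_\gamma^2C_{\gamma,2\gamma-n,\gamma,n}\right]^2.$$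
   Context: $\omega_n=n+1$, $C_{ijkm}=\frac2\pi\int_{-1}^1U_iU_jU_kU_m\sqrt{1-y^2}\,dy$ ($U_n$ Chebyshev polynomials of the second kind). $l^2_s$: sequences with $\sum_jj^{2s}|u^j|^2<\infty$. $(A\xi)^m=\omega_m^2\xi^m$; $(f(u))^m=-\sum_{i,j,k\ge0}C_{ijkm}u^iu^ju^k$; $\Phi^t(\xi)=\{\xi^n\cos(\omega_nt)\}_n$; $\mathcal{M}(\xi)=A\xi+\frac1{2\pi}\int_0^{2\pi}\Phi^t[f(\Phi^t(\xi))]dt$. *)

theory Defs
  imports "HOL-Analysis.Analysis"
begin

fun chebU :: "nat \<Rightarrow> real \<Rightarrow> real" where
  "chebU 0 y = 1"
| "chebU (Suc 0) y = 2 * y"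
| "chebU (Suc (Suc n)) y = 2 * y * chebU (Suc n) y - chebU n y"

definition om :: "nat \<Rightarrow> real" where
  "om n = real n + 1"

definition CC :: "nat \<Rightarrow> nat \<Rightarrow> nat \<Rightarrow> nat \<Rightarrow> real" where
  "CC i j k m = (2 / pi) * integral {-1..1}
      (\<lambda>y. chebU i y * chebU j y * chebU k y * chebU m y * sqrt (1 - y\<^sup>2))"

definition l2s :: "real \<Rightarrow> (nat \<Rightarrow> real) \<Rightarrow> bool" where
  "l2s s u \<longleftrightarrow> summable (\<lambda>j. real j powr (2 * s) * (u j)\<^sup>2)"

definition fnl :: "(nat \<Rightarrow> real) \<Rightarrow> nat \<Rightarrow> real" where
  "fnl u m = - (\<Sum>\<^sub>\<infinity>(i, j, k) \<in> UNIV. CC i j k m * u i * u j * u k)"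

definition Phi :: "real \<Rightarrow> (nat \<Rightarrow> real) \<Rightarrow> nat \<Rightarrow> real" where
  "Phi t \<xi> n = \<xi> n * cos (om n * t)"

definition MM :: "(nat \<Rightarrow> real) \<Rightarrow> nat \<Rightarrow> real" where
  "MM \<xi> m = (om m)\<^sup>2 * \<xi> m
      + (1 / (2 * pi)) * integral {0..2 * pi} (\<lambda>t. Phi t (fnl (Phi t \<xi>)) m)"

definition dM :: "(nat \<Rightarrow> real) \<Rightarrow> (nat \<Rightarrow> real) \<Rightarrow> nat \<Rightarrow> real" where
  "dM \<xi> \<eta> m = deriv (\<lambda>\<epsilon>. MM (\<lambda>j. \<xi> j + \<epsilon> * \<eta> j) m) 0"

definition ker_dM :: "real \<Rightarrow> (nat \<Rightarrow> real) \<Rightarrow> (nat \<Rightarrow> real) set" where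
  "ker_dM s \<xi> = {\<eta>. l2s (s + 3) \<eta> \<and> (\<forall>m. dM \<xi> \<eta> m = 0)}"

definition Dgn :: "nat \<Rightarrow> nat \<Rightarrow> real" where
  "Dgn g n =
     ((om n)\<^sup>2 * CC g g g g - 2 * (om g)\<^sup>2 * CC g g n n)
   * ((om (2*g - n))\<^sup>2 * CC g g g g - 2 * (om g)\<^sup>2 * CC g g (2*g - n) (2*g - n))
   - ((om g)\<^sup>2 * CC g (2*g - n) g n)\<^sup>2"

end

(* For xi = K e_gamma only the part of the cubic nonlinearity that is linear in eta survives in
   dM(xi) eta: the time average of 3 K^2 cos^2(omega_gamma t) cos(omega_m t) sum_k C_(gamma,gamma,k,m)
   eta_k cos(omega_k t). Orthogonality of the Chebyshev polynomials makes C_(gamma,gamma,k,m) vanish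
   for k > m + 2 gamma, and averaging the product of four cosines leaves only the resonant modes
   k = m and k = 2 gamma - m. With 3 K^2 / 8 = omega_gamma^2 / C_(gamma,gamma,gamma,gamma), the kernel
   equation therefore splits into scalar equations for the modes m > 2 gamma and m = gamma (the
   latter never degenerate, as C_(gamma,gamma,gamma,gamma) > 0) and into 2x2 systems coupling the
   modes n and 2 gamma - n for n < gamma, with determinants D_(gamma,n). A degenerate equation or
   system has a nonzero finitely supported solution, which lies in l^2_(s+3). *)

theory Submission
  imports Defs
begin

section \<open>Chebyshev polynomials and the coefficients C\<close>

lemma chebU_cos_mult_sin: "chebU n (cos t) * sin t = sin ((real n + 1) * t)"
proof (induction n rule: induct_nat_012)
  case (ge2 n)
  have "sin ((real n + 3) * t) = 2 * cos t * sin ((real n + 2) * t) - sin ((real n + 1) * t)"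
    using sin_add[of "(real n + 2) * t" t] sin_diff[of "(real n + 2) * t" t]
    by (simp add: algebra_simps)
  with ge2 show ?case by (simp add: algebra_simps)
qed (simp_all add: sin_double)

lemma chebU_cos: "chebU n (cos t) = (\<Sum>r\<le>n. cos ((real n - 2 * real r) * t))"
proof (induction n rule: induct_nat_012)
  case (ge2 n)
  define c where "c x = cos (x * t)" for x
  have prod: "2 * cos t * c x = c (x + 1) + c (x - 1)" for x
    unfolding c_def by (simp add: cos_add cos_diff algebra_simps)
  have "2 * cos t * (\<Sum>r\<le>Suc n. c (real (Suc n) - 2 * real r))
      = (\<Sum>r\<le>Suc n. c (real (Suc n) - 2 * real r + 1))
        + (\<Sum>r\<le>Suc n. c (real (Suc n) - 2 * real r - 1))"
    by (simp only: sum_distrib_left prod sum.distrib)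
  also have "(\<Sum>r\<le>Suc n. c (real (Suc n) - 2 * real r + 1))
      = (\<Sum>r\<le>Suc (Suc n). c (real (Suc (Suc n)) - 2 * real r)) - c (- real (Suc (Suc n)))"
    by (simp add: algebra_simps)
  also have "(\<Sum>r\<le>Suc n. c (real (Suc n) - 2 * real r - 1))
      = (\<Sum>r\<le>n. c (real n - 2 * real r)) + c (- real (Suc (Suc n)))"
    by (simp add: algebra_simps)
  finally show ?case
    using ge2 unfolding c_def by simp
qed simp_all

lemma abs_chebU_le:
  assumes "\<bar>y\<bar> \<le> 1"
  shows "\<bar>chebU n y\<bar> \<le> real n + 1"
proof -
  have "\<bar>chebU n y\<bar> = \<bar>\<Sum>r\<le>n. cos ((real n - 2 * real r) * arccos y)\<bar>"
    using chebU_cos[of n "arccos y"] assms by simp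
  also have "\<dots> \<le> (\<Sum>r\<le>n. 1)"
    by (rule order_trans[OF sum_abs]) (intro sum_mono, simp)
  finally show ?thesis by simp
qed

lemma continuous_on_chebU: "continuous_on S (chebU n)"
  by (induction n rule: induct_nat_012) (auto intro!: continuous_intros)

lemma has_integral_cos_int_mult:
  fixes z :: int and a b :: real
  assumes "a \<le> b" "sin (of_int z * a) = sin (of_int z * b)"
  shows "((\<lambda>t. cos (of_int z * t)) has_integral (if z = 0 then b - a else 0)) {a..b}"
proof (cases "z = 0")
  case False
  have "((\<lambda>t. cos (of_int z * t))
      has_integral (sin (of_int z * b) / of_int z - sin (of_int z * a) / of_int z)) {a..b}"
  proof (rule fundamental_theorem_of_calculus[OF assms(1)])
    fix x
    have "((\<lambda>t. sin (of_int z * t) / of_int z)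
        has_real_derivative (cos (of_int z * x) * of_int z / of_int z)) (at x within {a..b})"
      by (auto intro!: derivative_eq_intros)
    then show "((\<lambda>t. sin (of_int z * t) / of_int z)
        has_vector_derivative cos (of_int z * x)) (at x within {a..b})"
      using False by (simp add: has_real_derivative_iff_has_vector_derivative)
  qed
  with False assms(2) show ?thesis by simp
qed (use has_integral_const_real[of "1::real" a b] assms(1) in simp)

lemma has_integral_cos_int_mult_0_2pi:
  fixes z :: int
  shows "((\<lambda>t. cos (of_int z * t)) has_integral 2 * pi * of_bool (z = 0)) {0..2 * pi}"
proof -
  have "sin (of_int z * 0) = sin (of_int z * (2 * pi))"
    using sin_npi_int[of "2 * z"] by (simp add: mult_ac)
  from has_integral_cos_int_mult[OF _ this] show ?thesis by (cases "z = 0") simp_all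
qed

lemma has_integral_cos_int_mult_mpi_0:
  fixes z :: int
  assumes "z \<noteq> 0"
  shows "((\<lambda>t. cos (of_int z * t)) has_integral 0) {-pi..0}"
proof -
  have "sin (of_int z * (-pi)) = sin (of_int z * 0)"
    using sin_npi_int[of "-z"] by (simp add: mult_ac)
  from has_integral_cos_int_mult[OF _ this] assms show ?thesis by simp
qed

lemma cos_cos_cos_cos_eq:
  fixes x y z w :: real
  shows "cos x * cos y * cos z * cos w =
    (cos (x+y+z+w) + cos (x+y+z-w) + cos (x+y-z+w) + cos (x+y-z-w)
   + cos (x-y+z+w) + cos (x-y+z-w) + cos (x-y-z+w) + cos (x-y-z-w)) / 8"
  by (simp add: cos_add sin_add cos_diff sin_diff algebra_simps)

lemma cos_cos_sin_sin_eq: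
  fixes x y z w :: real
  shows "cos x * cos y * sin z * sin w =
    (cos (x+y+z-w) + cos (x+y-z+w) - cos (x+y+z+w) - cos (x+y-z-w)
   + cos (x-y+z-w) + cos (x-y-z+w) - cos (x-y+z+w) - cos (x-y-z-w)) / 8"
  by (simp add: cos_add sin_add cos_diff sin_diff algebra_simps)

lemma has_integral_cos_cos_cos_cos_int:
  fixes a b c d :: int
  shows "((\<lambda>t. cos (of_int a * t) * cos (of_int b * t) * cos (of_int c * t) * cos (of_int d * t))
    has_integral pi / 4 * (of_bool (a+b+c+d = 0) + of_bool (a+b+c-d = 0) + of_bool (a+b-c+d = 0)
      + of_bool (a+b-c-d = 0) + of_bool (a-b+c+d = 0) + of_bool (a-b+c-d = 0) + of_bool (a-b-c+d = 0)
      + of_bool (a-b-c-d = 0))) {0..2 * pi}"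
proof -
  define f where "f z t = cos (of_int z * t)" for z :: int and t :: real
  have integral: "((\<lambda>t. (f (a+b+c+d) t + f (a+b+c-d) t + f (a+b-c+d) t + f (a+b-c-d) t
        + f (a-b+c+d) t + f (a-b+c-d) t + f (a-b-c+d) t + f (a-b-c-d) t) / 8) has_integral
     (2 * pi * of_bool (a+b+c+d = 0) + 2 * pi * of_bool (a+b+c-d = 0) + 2 * pi * of_bool (a+b-c+d = 0)
      + 2 * pi * of_bool (a+b-c-d = 0) + 2 * pi * of_bool (a-b+c+d = 0) + 2 * pi * of_bool (a-b+c-d = 0)
      + 2 * pi * of_bool (a-b-c+d = 0) + 2 * pi * of_bool (a-b-c-d = 0)) / 8) {0..2 * pi}"
    unfolding f_def by (intro has_integral_divide has_integral_add has_integral_cos_int_mult_0_2pi)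
  have expand: "cos (of_int a * t) * cos (of_int b * t) * cos (of_int c * t) * cos (of_int d * t) =
      (f (a+b+c+d) t + f (a+b+c-d) t + f (a+b-c+d) t + f (a+b-c-d) t
        + f (a-b+c+d) t + f (a-b+c-d) t + f (a-b-c+d) t + f (a-b-c-d) t) / 8" for t
    unfolding f_def by (simp only: of_int_add of_int_diff distrib_right left_diff_distrib cos_cos_cos_cos_eq)
  have rescale: "(2 * pi * x1 + 2 * pi * x2 + 2 * pi * x3 + 2 * pi * x4 + 2 * pi * x5 + 2 * pi * x6
      + 2 * pi * x7 + 2 * pi * x8) / 8 = pi / 4 * (x1 + x2 + x3 + x4 + x5 + x6 + x7 + x8)"
    for x1 x2 x3 x4 x5 x6 x7 x8 :: real
    by (simp add: field_simps)
  show ?thesis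
    using integral unfolding expand rescale .
qed

lemma has_integral_cos_cos_sin_sin_int:
  fixes p q a b :: int
  assumes "\<bar>p\<bar> + \<bar>q\<bar> < a - b" "b \<ge> 0"
  shows "((\<lambda>t. cos (of_int p * t) * cos (of_int q * t) * sin (of_int a * t) * sin (of_int b * t))
    has_integral 0) {-pi..0}"
proof -
  define f where "f z t = cos (of_int z * t)" for z :: int and t :: real
  have "(f z has_integral 0) {-pi..0}" if "z \<noteq> 0" for z
    unfolding f_def using has_integral_cos_int_mult_mpi_0[OF that] .
  moreover have "p+q+a-b \<noteq> 0" "p+q-a+b \<noteq> 0" "p+q+a+b \<noteq> 0" "p+q-a-b \<noteq> 0"
      "p-q+a-b \<noteq> 0" "p-q-a+b \<noteq> 0" "p-q+a+b \<noteq> 0" "p-q-a-b \<noteq> 0"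
    using assms by linarith+
  ultimately have integral: "((\<lambda>t. (f (p+q+a-b) t + f (p+q-a+b) t - f (p+q+a+b) t - f (p+q-a-b) t
        + f (p-q+a-b) t + f (p-q-a+b) t - f (p-q+a+b) t - f (p-q-a-b) t) / 8) has_integral
      (0 + 0 - 0 - 0 + 0 + 0 - 0 - 0) / 8) {-pi..0}"
    by (intro has_integral_divide has_integral_add has_integral_diff)
  have expand: "cos (of_int p * t) * cos (of_int q * t) * sin (of_int a * t) * sin (of_int b * t) =
      (f (p+q+a-b) t + f (p+q-a+b) t - f (p+q+a+b) t - f (p+q-a-b) t
        + f (p-q+a-b) t + f (p-q-a+b) t - f (p-q+a+b) t - f (p-q-a-b) t) / 8" for t
    unfolding f_def by (simp only: of_int_add of_int_diff distrib_right left_diff_distrib cos_cos_sin_sin_eq)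
  show ?thesis
    unfolding expand using integral by simp
qed

lemma has_integral_cos_substitution:
  assumes F: "continuous_on {-1..1} F"
  shows "((\<lambda>t. F (cos t) * (sin t)\<^sup>2) has_integral integral {-1..1} (\<lambda>y. F y * sqrt (1 - y\<^sup>2))) {-pi..0}"
proof -
  have subst: "((\<lambda>t. (- sin t) *\<^sub>R (F (cos t) * sqrt (1 - (cos t)\<^sup>2)))
      has_integral integral {cos (-pi)..cos 0} (\<lambda>y. F y * sqrt (1 - y\<^sup>2))) {-pi..0}"
  proof (rule has_integral_substitution[where c = "-1" and d = 1])
    show "continuous_on {-1..1} (\<lambda>y. F y * sqrt (1 - y\<^sup>2))"
      by (intro continuous_intros F)
    show "(cos has_real_derivative - sin t) (at t within {-pi..0})" for t
      by (auto intro!: derivative_eq_intros)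
  qed auto
  have integrand: "(- sin t) *\<^sub>R (F (cos t) * sqrt (1 - (cos t)\<^sup>2)) = F (cos t) * (sin t)\<^sup>2"
    if "t \<in> {-pi..0}" for t
  proof -
    have "sin t \<le> 0" using that sin_ge_zero[of "-t"] by auto
    moreover have "1 - (cos t)\<^sup>2 = (sin t)\<^sup>2" by (simp add: sin_squared_eq)
    ultimately have "sqrt (1 - (cos t)\<^sup>2) = - sin t" by simp
    then show ?thesis by (simp add: power2_eq_square)
  qed
  from has_integral_cong[THEN iffD1, OF integrand subst] show ?thesis
    by simp
qed

lemma has_integral_CC:
  "((\<lambda>t. chebU i (cos t) * chebU j (cos t) * chebU k (cos t) * chebU m (cos t) * (sin t)\<^sup>2)
     has_integral pi / 2 * CC i j k m) {-pi..0}"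
  using has_integral_cos_substitution[of "\<lambda>y. chebU i y * chebU j y * chebU k y * chebU m y"]
  by (simp add: CC_def continuous_on_chebU continuous_on_mult)

lemma CC_commute:
  shows CC_commute_12: "CC i j k m = CC j i k m"
    and CC_commute_23: "CC i j k m = CC i k j m"
    and CC_commute_34: "CC i j k m = CC i j m k"
  unfolding CC_def by (simp_all add: mult_ac)

lemma abs_CC_le: "\<bar>CC i j k m\<bar> \<le> 2 * ((real i + 1) * (real j + 1) * (real k + 1) * (real m + 1))"
proof -
  let ?B = "(real i + 1) * (real j + 1) * (real k + 1) * (real m + 1)"
  have "\<bar>chebU i (cos t) * chebU j (cos t) * chebU k (cos t) * chebU m (cos t) * (sin t)\<^sup>2\<bar> \<le> ?B * 1" for t
    unfolding abs_mult by (intro mult_mono abs_chebU_le) (auto simp: abs_square_le_1)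
  then have "\<bar>pi / 2 * CC i j k m\<bar> \<le> ?B * pi"
    using has_integral_bound_real[OF _ _ has_integral_CC[of i j k m], of ?B "{}"] by simp
  then have "pi / 2 * \<bar>CC i j k m\<bar> \<le> pi / 2 * (2 * ?B)"
    by (simp add: abs_mult mult_ac)
  then show ?thesis
    by (rule mult_left_le_imp_le) simp
qed

text \<open>Orthogonality of \<open>U\<^sub>k\<close> to polynomials of lower degree: in the variable \<open>t\<close> with
  \<open>y = cos t\<close>, every frequency occurring in the integrand is nonzero.\<close>
lemma CC_eq_0:
  assumes "m + 2 * g < k"
  shows "CC g g k m = 0"
proof -
  define a where "a r = int g - 2 * int r" for r
  have integrand: "chebU g (cos t) * chebU g (cos t) * chebU k (cos t) * chebU m (cos t) * (sin t)\<^sup>2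
      = (\<Sum>r\<le>g. \<Sum>r'\<le>g. cos (of_int (a r') * t) * cos (of_int (a r) * t)
          * sin (of_int (int k + 1) * t) * sin (of_int (int m + 1) * t))" for t
  proof -
    have U: "chebU g (cos t) = (\<Sum>r\<le>g. cos (of_int (a r) * t))"
      unfolding chebU_cos a_def by simp
    have S: "chebU n (cos t) * sin t = sin (of_int (int n + 1) * t)" for n
      using chebU_cos_mult_sin[of n t] by simp
    have "chebU g (cos t) * chebU g (cos t) * chebU k (cos t) * chebU m (cos t) * (sin t)\<^sup>2
        = chebU g (cos t) * chebU g (cos t) * (chebU k (cos t) * sin t) * (chebU m (cos t) * sin t)"
      by (simp add: power2_eq_square mult_ac)
    also have "\<dots> = (\<Sum>r\<le>g. \<Sum>r'\<le>g. cos (of_int (a r') * t) * cos (of_int (a r) * t)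
          * sin (of_int (int k + 1) * t) * sin (of_int (int m + 1) * t))"
      unfolding U S by (simp only: sum_product sum_distrib_left sum_distrib_right mult.assoc)
    finally show ?thesis .
  qed
  have "((\<lambda>t. \<Sum>r\<le>g. \<Sum>r'\<le>g. cos (of_int (a r') * t) * cos (of_int (a r) * t)
      * sin (of_int (int k + 1) * t) * sin (of_int (int m + 1) * t)) has_integral (\<Sum>r\<le>g. \<Sum>r'\<le>g. 0)) {-pi..0}"
  proof (intro has_integral_sum finite_atMost has_integral_cos_cos_sin_sin_int)
    fix r r' assume "r \<in> {..g}" "r' \<in> {..g}"
    then have "\<bar>a r\<bar> \<le> int g" "\<bar>a r'\<bar> \<le> int g" unfolding a_def by auto
    with assms show "\<bar>a r'\<bar> + \<bar>a r\<bar> < int k + 1 - (int m + 1)" by linarith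
  qed simp
  then have "((\<lambda>t. chebU g (cos t) * chebU g (cos t) * chebU k (cos t) * chebU m (cos t) * (sin t)\<^sup>2)
      has_integral 0) {-pi..0}"
    unfolding integrand by simp
  from has_integral_unique[OF has_integral_CC this] show ?thesis by simp
qed

lemma CC_pos: "CC g g g g > 0"
proof -
  define f where "f y = (chebU g y)\<^sup>2 * (chebU g y)\<^sup>2 * sqrt (1 - y\<^sup>2)" for y
  have CC_f: "CC g g g g = 2 / pi * integral {-1..1} f"
    unfolding CC_def f_def by (simp add: power2_eq_square mult_ac)
  have cont: "continuous_on {-1..1} f"
    unfolding f_def by (intro continuous_intros continuous_on_chebU)
  have nonneg: "f y \<ge> 0" if "y \<in> {-1..1}" for y
    using that unfolding f_def by (auto intro!: mult_nonneg_nonneg simp: abs_square_le_1)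
  define \<theta> where "\<theta> = pi / (2 * (real g + 1))"
  have "0 < \<theta>" "\<theta> < pi"
    unfolding \<theta>_def by (auto simp: field_simps intro: add_pos_nonneg)
  then have sin_pos: "sin \<theta> > 0" by (simp add: sin_gt_zero)
  have "(real g + 1) * \<theta> = pi / 2"
    unfolding \<theta>_def by (simp add: field_simps)
  then have "chebU g (cos \<theta>) * sin \<theta> = 1"
    by (simp only: chebU_cos_mult_sin sin_pi_half)
  moreover have "sqrt (1 - (cos \<theta>)\<^sup>2) = sin \<theta>"
    using sin_pos by (simp add: cos_squared_eq)
  ultimately have "f (cos \<theta>) \<noteq> 0"
    unfolding f_def using sin_pos by auto
  moreover have "f (cos \<theta>) = 0" if "integral {-1..1} f = 0"
    by (rule has_integral_0_cbox_imp_0[of "-1" 1 f])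
      (use cont nonneg that integrable_integral[OF integrable_continuous_interval[OF cont]] in auto)
  moreover have "integral {-1..1} f \<ge> 0"
    using cont nonneg by (intro integral_nonneg integrable_continuous_interval) auto
  ultimately have "integral {-1..1} f > 0"
    by fastforce
  then show ?thesis
    unfolding CC_f by simp
qed

section \<open>The cubic nonlinearity and its linearisation\<close>

lemma summable_on_product_nonneg:
  fixes f g :: "_ \<Rightarrow> real"
  assumes "f summable_on A" "g summable_on B" "\<And>x. x \<in> A \<Longrightarrow> f x \<ge> 0" "\<And>y. y \<in> B \<Longrightarrow> g y \<ge> 0"
  shows "(\<lambda>(x, y). f x * g y) summable_on A \<times> B"
proof (rule summable_on_SigmaI[where g = "\<lambda>x. f x * infsum g B"])
  show "((\<lambda>y. case (x, y) of (x, y) \<Rightarrow> f x * g y) has_sum f x * infsum g B) B" for x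
    using has_sum_cmult_right[OF has_sum_infsum[OF assms(2)]] by simp
qed (use assms in \<open>auto intro: summable_on_cmult_left\<close>)

lemma summable_on_product3_nonneg:
  fixes f g h :: "nat \<Rightarrow> real"
  assumes "f summable_on UNIV" "g summable_on UNIV" "h summable_on UNIV"
    and "\<And>i. f i \<ge> 0" "\<And>j. g j \<ge> 0" "\<And>k. h k \<ge> 0"
  shows "(\<lambda>(i, j, k). f i * g j * h k) summable_on UNIV"
proof -
  have gh: "(\<lambda>(j, k). g j * h k) summable_on UNIV"
    using summable_on_product_nonneg[of g UNIV h UNIV] assms by simp
  have "(\<lambda>(i, jk). f i * (\<lambda>(j, k). g j * h k) jk) summable_on UNIV \<times> UNIV"
    by (rule summable_on_product_nonneg) (use assms gh in \<open>auto split: prod.splits\<close>)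
  moreover have "(\<lambda>(i, jk). f i * (\<lambda>(j, k). g j * h k) jk) = (\<lambda>(i, j, k). f i * g j * h k)"
    by (auto simp: mult.assoc)
  ultimately show ?thesis
    by simp
qed

text \<open>The space on which the cubic series in \<^const>\<open>fnl\<close> converges absolutely, by \<open>abs_CC_le\<close>.\<close>
definition weighted_summable :: "(nat \<Rightarrow> real) \<Rightarrow> bool" where
  "weighted_summable a \<longleftrightarrow> (\<lambda>i. (real i + 1) * \<bar>a i\<bar>) summable_on UNIV"

lemma weighted_summable_finite_support:
  assumes "finite {i. a i \<noteq> 0}"
  shows "weighted_summable a"
proof -
  have "(\<lambda>i. (real i + 1) * \<bar>a i\<bar>) summable_on UNIV \<longleftrightarrow> (\<lambda>i. (real i + 1) * \<bar>a i\<bar>) summable_on {i. a i \<noteq> 0}"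
    by (rule summable_on_cong_neutral) auto
  with assms show ?thesis
    unfolding weighted_summable_def by simp
qed

lemma weighted_summable_if_l2s:
  assumes "3 / 2 < r" "l2s r \<eta>"
  shows "weighted_summable \<eta>"
proof -
  have "summable (\<lambda>i. real i powr (2 * r) * (\<eta> i)\<^sup>2 + real i powr (2 - 2 * r))"
    using assms by (intro summable_add) (auto simp: l2s_def summable_real_powr_iff)
  then have "summable (\<lambda>i. (real i + 1) * \<bar>\<eta> i\<bar>)"
  proof (rule summable_comparison_test'[where N = 1])
    fix i :: nat assume "1 \<le> i"
    then have x: "real i \<ge> 1" by simp
    have "(real i + 1) * \<bar>\<eta> i\<bar> \<le> (2 * real i) * \<bar>\<eta> i\<bar>"
      using x by (intro mult_right_mono) auto
    also have "\<dots> = 2 * \<bar>\<eta> i\<bar> * real i"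
      by simp
    also have "\<dots> = 2 * \<bar>\<eta> i\<bar> * (real i powr r * real i powr (1 - r))"
      using x by (simp flip: powr_add)
    also have "\<dots> = 2 * (real i powr r * \<bar>\<eta> i\<bar>) * real i powr (1 - r)"
      by (simp only: mult_ac)
    also have "\<dots> \<le> (real i powr r * \<bar>\<eta> i\<bar>)\<^sup>2 + (real i powr (1 - r))\<^sup>2"
      by (rule sum_squares_bound)
    also have "\<dots> = real i powr (2 * r) * (\<eta> i)\<^sup>2 + real i powr (2 - 2 * r)"
      using x by (simp add: power2_eq_square power_mult_distrib algebra_simps flip: powr_add)
    finally show "norm ((real i + 1) * \<bar>\<eta> i\<bar>) \<le> real i powr (2 * r) * (\<eta> i)\<^sup>2 + real i powr (2 - 2 * r)"
      by simp
  qed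
  then show ?thesis
    unfolding weighted_summable_def by (subst summable_on_UNIV_nonneg_real_iff) auto
qed

lemma l2s_finite_support: "finite {i. a i \<noteq> 0} \<Longrightarrow> l2s r a"
  unfolding l2s_def by (rule summable_finite) auto

definition trilin :: "nat \<Rightarrow> (nat \<Rightarrow> real) \<Rightarrow> (nat \<Rightarrow> real) \<Rightarrow> (nat \<Rightarrow> real) \<Rightarrow> real" where
  "trilin m p q r = (\<Sum>\<^sub>\<infinity>(i, j, k) \<in> UNIV. CC i j k m * p i * q j * r k)"

lemma fnl_eq_trilin: "fnl u m = - trilin m u u u"
  by (simp add: fnl_def trilin_def)

lemma abs_trilin_summand_le:
  assumes "\<bar>p i\<bar> \<le> \<bar>a i\<bar>" "\<bar>q j\<bar> \<le> \<bar>b j\<bar>" "\<bar>r k\<bar> \<le> \<bar>c k\<bar>"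
  shows "\<bar>CC i j k m * p i * q j * r k\<bar>
    \<le> (2 * (real m + 1) * ((real i + 1) * \<bar>a i\<bar>)) * ((real j + 1) * \<bar>b j\<bar>) * ((real k + 1) * \<bar>c k\<bar>)"
proof -
  have "\<bar>CC i j k m * p i * q j * r k\<bar> = \<bar>CC i j k m\<bar> * (\<bar>p i\<bar> * \<bar>q j\<bar> * \<bar>r k\<bar>)"
    by (simp add: abs_mult)
  also have "\<dots> \<le> (2 * ((real i + 1) * (real j + 1) * (real k + 1) * (real m + 1))) * (\<bar>a i\<bar> * \<bar>b j\<bar> * \<bar>c k\<bar>)"
    by (intro mult_mono abs_CC_le assms) auto
  finally show ?thesis
    by (simp add: algebra_simps)
qed

lemma summable_trilin_majorant:
  assumes "weighted_summable a" "weighted_summable b" "weighted_summable c"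
  shows "(\<lambda>(i, j, k). (2 * (real m + 1) * ((real i + 1) * \<bar>a i\<bar>)) * ((real j + 1) * \<bar>b j\<bar>)
    * ((real k + 1) * \<bar>c k\<bar>)) summable_on UNIV"
  using assms unfolding weighted_summable_def
  by (intro summable_on_product3_nonneg summable_on_cmult_right) auto

lemma summable_trilin:
  assumes "weighted_summable p" "weighted_summable q" "weighted_summable r"
  shows "(\<lambda>(i, j, k). CC i j k m * p i * q j * r k) summable_on UNIV"
proof (rule abs_summable_summable)
  show "(\<lambda>x. norm (case x of (i, j, k) \<Rightarrow> CC i j k m * p i * q j * r k)) summable_on UNIV"
  proof (rule summable_on_comparison_test[OF summable_trilin_majorant[OF assms, of m]])
    fix x :: "nat \<times> nat \<times> nat"
    obtain i j k where "x = (i, j, k)" by (cases x)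
    then show "norm (case x of (i, j, k) \<Rightarrow> CC i j k m * p i * q j * r k)
      \<le> (case x of (i, j, k) \<Rightarrow> 2 * (real m + 1) * ((real i + 1) * \<bar>p i\<bar>) * ((real j + 1) * \<bar>q j\<bar>)
        * ((real k + 1) * \<bar>r k\<bar>))"
      using abs_trilin_summand_le[of p i p q j q r k r m] by simp
  qed simp
qed

lemma has_sum_trilin:
  assumes "weighted_summable p" "weighted_summable q" "weighted_summable r"
  shows "((\<lambda>(i, j, k). CC i j k m * p i * q j * r k) has_sum trilin m p q r) UNIV"
  unfolding trilin_def using summable_trilin[OF assms] by simp

lemma trilin_commute_12: "trilin m p q r = trilin m q p r"
proof -
  have bij: "bij_betw (\<lambda>(i, j, k). (j, i, k)) UNIV UNIV"
    by (rule bij_betwI[where g = "\<lambda>(i, j, k). (j, i, k)"]) auto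
  have reindex: "(\<lambda>x. (\<lambda>(i, j, k). CC i j k m * q i * p j * r k) ((\<lambda>(i, j, k). (j, i, k)) x))
      = (\<lambda>(i, j, k). CC i j k m * p i * q j * r k)"
    by (rule ext) (auto simp: CC_commute_12[of _ _ _ m] mult_ac)
  show ?thesis
    unfolding trilin_def reindex[symmetric] by (rule infsum_reindex_bij_betw[OF bij])
qed

lemma trilin_commute_23: "trilin m p q r = trilin m p r q"
proof -
  have bij: "bij_betw (\<lambda>(i, j, k). (i, k, j)) UNIV UNIV"
    by (rule bij_betwI[where g = "\<lambda>(i, j, k). (i, k, j)"]) auto
  have reindex: "(\<lambda>x. (\<lambda>(i, j, k). CC i j k m * p i * r j * q k) ((\<lambda>(i, j, k). (i, k, j)) x))
      = (\<lambda>(i, j, k). CC i j k m * p i * q j * r k)"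
    by (rule ext) (auto simp: CC_commute_23[of _ _ _ m] mult_ac)
  show ?thesis
    unfolding trilin_def reindex[symmetric] by (rule infsum_reindex_bij_betw[OF bij])
qed

lemma abs_Phi_le: "\<bar>Phi t a i\<bar> \<le> \<bar>a i\<bar>"
  unfolding Phi_def abs_mult by (rule mult_left_le) auto

lemma weighted_summable_Phi:
  assumes "weighted_summable a"
  shows "weighted_summable (Phi t a)"
  using assms unfolding weighted_summable_def
  by (rule summable_on_comparison_test) (auto intro: mult_left_mono abs_Phi_le)

lemma Phi_add_scaled: "Phi t (\<lambda>j. a j + e * b j) = (\<lambda>i. Phi t a i + e * Phi t b i)"
  by (auto simp: Phi_def algebra_simps)

lemma continuous_on_trilin_Phi:
  assumes "weighted_summable a" "weighted_summable b" "weighted_summable c"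
  shows "continuous_on UNIV (\<lambda>t. trilin m (Phi t a) (Phi t b) (Phi t c))"
proof -
  let ?f = "\<lambda>x t. case x of (i, j, k) \<Rightarrow> CC i j k m * Phi t a i * Phi t b j * Phi t c k"
  have "uniform_limit UNIV (\<lambda>F t. \<Sum>x\<in>F. ?f x t) (\<lambda>t. \<Sum>\<^sub>\<infinity>x. ?f x t) (finite_subsets_at_top UNIV)"
  proof (rule Weierstrass_m_test_general[OF _ summable_trilin_majorant[OF assms, of m]])
    fix x :: "nat \<times> nat \<times> nat" and t :: real
    obtain i j k where "x = (i, j, k)" by (cases x)
    then show "norm (?f x t) \<le> (case x of (i, j, k) \<Rightarrow> 2 * (real m + 1) * ((real i + 1) * \<bar>a i\<bar>)
      * ((real j + 1) * \<bar>b j\<bar>) * ((real k + 1) * \<bar>c k\<bar>))"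
      using abs_trilin_summand_le[of "Phi t a" i a "Phi t b" j b "Phi t c" k c m] abs_Phi_le by simp
  qed
  then show ?thesis
    unfolding trilin_def
    by (rule uniform_limit_theorem[rotated])
      (auto intro!: always_eventually continuous_intros simp: Phi_def split: prod.splits)
qed

lemma trilin_add_scaled_cube:
  fixes e :: real
  assumes "weighted_summable x" "weighted_summable y"
  defines "v \<equiv> \<lambda>i. x i + e * y i"
  shows "trilin m v v v
    = trilin m x x x + 3 * e * trilin m x x y + 3 * e\<^sup>2 * trilin m x y y + e ^ 3 * trilin m y y y"
proof -
  let ?T = "\<lambda>p q r. (\<lambda>(i, j, k). CC i j k m * p i * q j * r k)"
  have "((\<lambda>z. ?T x x x z + e * (?T y x x z + ?T x y x z + ?T x x y z)
        + e\<^sup>2 * (?T x y y z + ?T y x y z + ?T y y x z) + e ^ 3 * ?T y y y z) has_sum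
      trilin m x x x + e * (trilin m y x x + trilin m x y x + trilin m x x y)
        + e\<^sup>2 * (trilin m x y y + trilin m y x y + trilin m y y x) + e ^ 3 * trilin m y y y) UNIV"
    using assms by (intro has_sum_add has_sum_cmult_right has_sum_trilin)
  then have "(?T v v v has_sum
      trilin m x x x + e * (trilin m y x x + trilin m x y x + trilin m x x y)
        + e\<^sup>2 * (trilin m x y y + trilin m y x y + trilin m y y x) + e ^ 3 * trilin m y y y) UNIV"
    by (rule has_sum_cong[THEN iffD1, rotated])
      (auto simp: v_def algebra_simps power2_eq_square power3_eq_cube)
  then have "trilin m v v v = trilin m x x x + e * (trilin m y x x + trilin m x y x + trilin m x x y)
        + e\<^sup>2 * (trilin m x y y + trilin m y x y + trilin m y y x) + e ^ 3 * trilin m y y y"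
    unfolding trilin_def[of m v v v] by (rule infsumI)
  moreover have "trilin m y x x = trilin m x x y" "trilin m x y x = trilin m x x y"
    "trilin m y x y = trilin m x y y" "trilin m y y x = trilin m x y y"
    by (metis trilin_commute_12 trilin_commute_23)+
  ultimately show ?thesis
    by (simp add: algebra_simps)
qed

lemma MM_eq_trilin:
  "MM \<xi> m = (om m)\<^sup>2 * \<xi> m
    - integral {0..2 * pi} (\<lambda>t. trilin m (Phi t \<xi>) (Phi t \<xi>) (Phi t \<xi>) * cos (om m * t)) / (2 * pi)"
  by (simp add: MM_def Phi_def[of _ "fnl _"] fnl_eq_trilin)

lemma dM_eq_trilin:
  assumes "weighted_summable \<xi>" "weighted_summable \<eta>"
  shows "dM \<xi> \<eta> m = (om m)\<^sup>2 * \<eta> m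
    - 3 * integral {0..2 * pi} (\<lambda>t. trilin m (Phi t \<xi>) (Phi t \<xi>) (Phi t \<eta>) * cos (om m * t)) / (2 * pi)"
proof -
  define G where "G p q r t = trilin m (Phi t p) (Phi t q) (Phi t r) * cos (om m * t)" for p q r t
  define I where "I p q r = integral {0..2 * pi} (G p q r)" for p q r
  have has_integral_G: "(G p q r has_integral I p q r) {0..2 * pi}"
    if "weighted_summable p" "weighted_summable q" "weighted_summable r" for p q r
  proof -
    have "continuous_on {0..2 * pi} (G p q r)"
      unfolding G_def
      by (intro continuous_intros continuous_on_subset[OF continuous_on_trilin_Phi[OF that]]) auto
    then show ?thesis
      unfolding I_def by (simp add: integrable_continuous_interval integrable_integral)
  qed
  have MM_poly: "MM (\<lambda>j. \<xi> j + e * \<eta> j) m = (om m)\<^sup>2 * \<xi> m + e * ((om m)\<^sup>2 * \<eta> m)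
      - (I \<xi> \<xi> \<xi> + 3 * e * I \<xi> \<xi> \<eta> + 3 * e\<^sup>2 * I \<xi> \<eta> \<eta> + e ^ 3 * I \<eta> \<eta> \<eta>) / (2 * pi)" for e
  proof -
    have "((\<lambda>t. G \<xi> \<xi> \<xi> t + 3 * e * G \<xi> \<xi> \<eta> t + 3 * e\<^sup>2 * G \<xi> \<eta> \<eta> t + e ^ 3 * G \<eta> \<eta> \<eta> t) has_integral
        I \<xi> \<xi> \<xi> + 3 * e * I \<xi> \<xi> \<eta> + 3 * e\<^sup>2 * I \<xi> \<eta> \<eta> + e ^ 3 * I \<eta> \<eta> \<eta>) {0..2 * pi}"
      using assms by (intro has_integral_add has_integral_mult_right has_integral_G)
    moreover have "trilin m (Phi t (\<lambda>j. \<xi> j + e * \<eta> j)) (Phi t (\<lambda>j. \<xi> j + e * \<eta> j))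
        (Phi t (\<lambda>j. \<xi> j + e * \<eta> j)) * cos (om m * t)
      = G \<xi> \<xi> \<xi> t + 3 * e * G \<xi> \<xi> \<eta> t + 3 * e\<^sup>2 * G \<xi> \<eta> \<eta> t + e ^ 3 * G \<eta> \<eta> \<eta> t" for t
      unfolding Phi_add_scaled G_def
      by (simp add: trilin_add_scaled_cube weighted_summable_Phi assms algebra_simps)
    ultimately show ?thesis
      unfolding MM_eq_trilin by (simp add: integral_unique algebra_simps)
  qed
  have "dM \<xi> \<eta> m = (om m)\<^sup>2 * \<eta> m - 3 * I \<xi> \<xi> \<eta> / (2 * pi)"
    unfolding dM_def MM_poly by (rule DERIV_imp_deriv) (auto intro!: derivative_eq_intros)
  then show ?thesis
    unfolding I_def G_def .
qed

section \<open>The mirror system\<close>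

definition solves_mirror_system :: "nat \<Rightarrow> (nat \<Rightarrow> real) \<Rightarrow> (nat \<Rightarrow> real) \<Rightarrow> (nat \<Rightarrow> real) \<Rightarrow> bool" where
  "solves_mirror_system g a b \<eta> \<longleftrightarrow> (\<forall>m. a m * \<eta> m = (if m \<le> 2 * g then b m * \<eta> (2 * g - m) else 0))"

lemma two_by_two_only_trivial:
  fixes a a' b x y :: real
  assumes "a * x = b * y" "a' * y = b * x" "a * a' - b\<^sup>2 \<noteq> 0"
  shows "x = 0" "y = 0"
proof -
  have "(a * a' - b\<^sup>2) * x = a' * (a * x) - b * (b * x)" "(a * a' - b\<^sup>2) * y = a * (a' * y) - b * (b * y)"
    by (simp_all add: algebra_simps power2_eq_square)
  then have "(a * a' - b\<^sup>2) * x = 0" "(a * a' - b\<^sup>2) * y = 0"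
    using assms(1,2) by simp_all
  with assms(3) show "x = 0" "y = 0"
    by simp_all
qed

lemma two_by_two_nontrivial:
  fixes a a' b :: real
  assumes "a * a' = b\<^sup>2"
  obtains x y where "x \<noteq> 0 \<or> y \<noteq> 0" "a * x = b * y" "a' * y = b * x"
proof (cases "a = 0 \<and> b = 0")
  case True
  with that[of 1 0] show ?thesis by simp
next
  case False
  with assms that[of b a] show ?thesis by (auto simp: power2_eq_square mult.commute)
qed

lemma mirror_system_only_trivial:
  assumes b_sym: "\<And>n. n \<le> 2 * g \<Longrightarrow> b (2 * g - n) = b n"
    and "a g \<noteq> b g"
    and "\<forall>m \<ge> 2 * g + 1. a m \<noteq> 0"
    and pair: "\<forall>n < g. a n * a (2 * g - n) - (b n)\<^sup>2 \<noteq> 0"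
    and "solves_mirror_system g a b \<eta>"
  shows "\<eta> = (\<lambda>_. 0)"
proof
  have eq: "a m * \<eta> m = (if m \<le> 2 * g then b m * \<eta> (2 * g - m) else 0)" for m
    using assms(5) unfolding solves_mirror_system_def by blast
  have pair_zero: "\<eta> n = 0 \<and> \<eta> (2 * g - n) = 0" if "n < g" for n
    using two_by_two_only_trivial[OF _ _ pair[rule_format, OF that]] eq[of n] eq[of "2 * g - n"]
      b_sym[of n] that
    by simp
  fix m
  consider "2 * g + 1 \<le> m" | "m = g" | "m < g" | "g < m \<and> m \<le> 2 * g"
    by linarith
  then show "\<eta> m = 0"
  proof cases
    case 1
    then show ?thesis using eq[of m] assms(3) by simp
  next
    case 2
    then show ?thesis using eq[of g] assms(2) by simp
  next
    case 3
    then show ?thesis using pair_zero by blast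
  next
    case 4
    then have "2 * g - m < g" by linarith
    then show ?thesis using pair_zero[of "2 * g - m"] 4 by simp
  qed
qed

lemma mirror_system_nontrivial:
  assumes b_sym: "\<And>n. n \<le> 2 * g \<Longrightarrow> b (2 * g - n) = b n"
    and "(\<exists>m \<ge> 2 * g + 1. a m = 0) \<or> (\<exists>n < g. a n * a (2 * g - n) - (b n)\<^sup>2 = 0)"
  obtains \<eta> where "solves_mirror_system g a b \<eta>" "finite {i. \<eta> i \<noteq> 0}" "\<eta> \<noteq> (\<lambda>_. 0)"
  using assms(2)
proof (elim disjE exE conjE)
  fix m assume "2 * g + 1 \<le> m" "a m = 0"
  then show thesis
    by (intro that[of "\<lambda>i. if i = m then 1 else 0"]) (auto simp: solves_mirror_system_def fun_eq_iff)
next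
  fix n assume n: "n < g" "a n * a (2 * g - n) - (b n)\<^sup>2 = 0"
  then obtain x y where xy: "x \<noteq> 0 \<or> y \<noteq> 0" "a n * x = b n * y" "a (2 * g - n) * y = b n * x"
    using two_by_two_nontrivial[of "a n" "a (2 * g - n)" "b n"] by auto
  define \<eta> where "\<eta> = (\<lambda>i. if i = n then x else if i = 2 * g - n then y else 0)"
  have "solves_mirror_system g a b \<eta>"
    unfolding solves_mirror_system_def
  proof
    fix m
    show "a m * \<eta> m = (if m \<le> 2 * g then b m * \<eta> (2 * g - m) else 0)"
      using n xy b_sym[of n] by (cases "m = n \<or> m = 2 * g - n") (auto simp: \<eta>_def)
  qed
  moreover have "finite {i. \<eta> i \<noteq> 0}"
    by (rule finite_subset[of _ "{n, 2 * g - n}"]) (auto simp: \<eta>_def)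
  moreover have "\<eta> \<noteq> (\<lambda>_. 0)"
  proof
    assume "\<eta> = (\<lambda>_. 0)"
    then have "\<eta> n = 0" "\<eta> (2 * g - n) = 0" by simp_all
    moreover have "2 * g - n \<noteq> n" using n by linarith
    ultimately show False
      using xy(1) by (simp add: \<eta>_def)
  qed
  ultimately show thesis
    by (rule that)
qed

lemma mirror_system_trivial_iff:
  assumes "\<And>n. n \<le> 2 * g \<Longrightarrow> b (2 * g - n) = b n"
    and "a g \<noteq> b g"
    and "\<And>\<eta>. finite {i. \<eta> i \<noteq> 0} \<Longrightarrow> \<eta> \<in> V"
  shows "{\<eta> \<in> V. solves_mirror_system g a b \<eta>} = {\<lambda>_. 0} \<longleftrightarrow>
    (\<forall>m \<ge> 2 * g + 1. a m \<noteq> 0) \<and> (\<forall>n < g. a n * a (2 * g - n) - (b n)\<^sup>2 \<noteq> 0)"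
proof
  assume trivial: "{\<eta> \<in> V. solves_mirror_system g a b \<eta>} = {\<lambda>_. 0}"
  show "(\<forall>m \<ge> 2 * g + 1. a m \<noteq> 0) \<and> (\<forall>n < g. a n * a (2 * g - n) - (b n)\<^sup>2 \<noteq> 0)"
  proof (rule ccontr)
    assume "\<not> ((\<forall>m \<ge> 2 * g + 1. a m \<noteq> 0) \<and> (\<forall>n < g. a n * a (2 * g - n) - (b n)\<^sup>2 \<noteq> 0))"
    then have "(\<exists>m \<ge> 2 * g + 1. a m = 0) \<or> (\<exists>n < g. a n * a (2 * g - n) - (b n)\<^sup>2 = 0)"
      by auto
    with assms(1) obtain \<eta> where "solves_mirror_system g a b \<eta>" "finite {i. \<eta> i \<noteq> 0}" "\<eta> \<noteq> (\<lambda>_. 0)"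
      by (rule mirror_system_nontrivial)
    with assms(3) have "\<eta> \<in> {\<eta> \<in> V. solves_mirror_system g a b \<eta>}"
      by simp
    with \<open>\<eta> \<noteq> (\<lambda>_. 0)\<close> show False
      unfolding trivial by simp
  qed
next
  assume conditions: "(\<forall>m \<ge> 2 * g + 1. a m \<noteq> 0) \<and> (\<forall>n < g. a n * a (2 * g - n) - (b n)\<^sup>2 \<noteq> 0)"
  have "\<eta> = (\<lambda>_. 0)" if "solves_mirror_system g a b \<eta>" for \<eta>
    using mirror_system_only_trivial[where g = g and a = a and b = b, OF assms(1,2) _ _ that] conditions
    by simp
  moreover have "(\<lambda>_. 0) \<in> V"
    by (rule assms(3)) simp
  moreover have "solves_mirror_system g a b (\<lambda>_. 0)"
    by (simp add: solves_mirror_system_def)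
  ultimately show "{\<eta> \<in> V. solves_mirror_system g a b \<eta>} = {\<lambda>_. 0}"
    by blast
qed

section \<open>Linearisation at a single mode\<close>

lemma trilin_single_mode:
  assumes "\<And>i. i \<noteq> g \<Longrightarrow> p i = 0"
  shows "trilin m p p r = (p g)\<^sup>2 * (\<Sum>k\<le>m + 2 * g. CC g g k m * r k)"
proof -
  let ?f = "\<lambda>(i, j, k). CC i j k m * p i * p j * r k"
  have "trilin m p p r = infsum ?f ((\<lambda>k. (g, g, k)) ` {..m + 2 * g})"
    unfolding trilin_def
  proof (rule infsum_cong_neutral)
    fix x assume "x \<in> UNIV - (\<lambda>k. (g, g, k)) ` {..m + 2 * g}"
    moreover obtain i j k where "x = (i, j, k)" by (cases x)
    ultimately show "?f x = 0"
      using assms CC_eq_0[of m g k] by (cases "i = g \<and> j = g") (auto simp: image_iff not_less)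
  qed auto
  also have "\<dots> = (\<Sum>k\<le>m + 2 * g. ?f (g, g, k))"
    by (simp add: sum.reindex inj_on_def)
  finally show ?thesis
    by (simp add: sum_distrib_left power2_eq_square mult_ac)
qed

lemma has_integral_cos_sq_cos_cos:
  "((\<lambda>t. (cos (om g * t))\<^sup>2 * cos (om k * t) * cos (om m * t)) has_integral
     pi / 4 * (2 * of_bool (k = m) + of_bool (k = m + 2 * g + 2) + of_bool (m = k + 2 * g + 2)
       + of_bool (k + m = 2 * g))) {0..2 * pi}"
proof -
  have om: "om n = of_int (int n + 1)" for n
    unfolding om_def by simp
  have "(int g + 1 + (int g + 1) + (int k + 1) + (int m + 1) = 0) = False"
    "(int g + 1 + (int g + 1) + (int k + 1) - (int m + 1) = 0) = (m = k + 2 * g + 2)"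
    "(int g + 1 + (int g + 1) - (int k + 1) + (int m + 1) = 0) = (k = m + 2 * g + 2)"
    "(int g + 1 + (int g + 1) - (int k + 1) - (int m + 1) = 0) = (k + m = 2 * g)"
    "(int g + 1 - (int g + 1) + (int k + 1) + (int m + 1) = 0) = False"
    "(int g + 1 - (int g + 1) + (int k + 1) - (int m + 1) = 0) = (k = m)"
    "(int g + 1 - (int g + 1) - (int k + 1) + (int m + 1) = 0) = (k = m)"
    "(int g + 1 - (int g + 1) - (int k + 1) - (int m + 1) = 0) = False"
    by presburger+
  with has_integral_cos_cos_cos_cos_int[of "int g + 1" "int g + 1" "int k + 1" "int m + 1"]
  show ?thesis
    unfolding om[symmetric] by (simp add: power2_eq_square algebra_simps)
qed

lemma sum_cos_sq_cos_cos_weights: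
  fixes c :: "nat \<Rightarrow> real"
  assumes "\<And>k. m = k + 2 * g + 2 \<Longrightarrow> c k = 0"
  shows "(\<Sum>k\<le>m + 2 * g. c k * (2 * of_bool (k = m) + of_bool (k = m + 2 * g + 2)
      + of_bool (m = k + 2 * g + 2) + of_bool (k + m = 2 * g)))
    = 2 * c m + (if m \<le> 2 * g then c (2 * g - m) else 0)"
proof -
  have "(\<Sum>k\<le>m + 2 * g. c k * of_bool (m = k + 2 * g + 2)) = 0"
    using assms by (intro sum.neutral) auto
  moreover have "{..m + 2 * g} \<inter> {k. k + m = 2 * g} = (if m \<le> 2 * g then {2 * g - m} else {})"
    by auto
  ultimately show ?thesis
    by (simp add: distrib_left sum.distrib sum_distrib_left[symmetric] mult.left_commute[of _ 2])
qed

lemma integral_trilin_single_mode: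
  fixes g :: nat and K :: real
  defines "\<xi> \<equiv> \<lambda>j. if j = g then K else 0"
  shows "integral {0..2 * pi} (\<lambda>t. trilin m (Phi t \<xi>) (Phi t \<xi>) (Phi t \<eta>) * cos (om m * t))
    = pi / 4 * K\<^sup>2 * (2 * CC g g m m * \<eta> m + (if m \<le> 2 * g then CC g g (2 * g - m) m * \<eta> (2 * g - m) else 0))"
proof -
  define c where "c k = K\<^sup>2 * CC g g k m * \<eta> k" for k
  have integrand: "trilin m (Phi t \<xi>) (Phi t \<xi>) (Phi t \<eta>) * cos (om m * t)
      = (\<Sum>k\<le>m + 2 * g. c k * ((cos (om g * t))\<^sup>2 * cos (om k * t) * cos (om m * t)))" for t
    using trilin_single_mode[of g "Phi t \<xi>" m "Phi t \<eta>"]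
    by (simp add: Phi_def \<xi>_def c_def sum_distrib_left sum_distrib_right power_mult_distrib mult_ac)
  have "integral {0..2 * pi} (\<lambda>t. trilin m (Phi t \<xi>) (Phi t \<xi>) (Phi t \<eta>) * cos (om m * t))
      = (\<Sum>k\<le>m + 2 * g. c k * (pi / 4 * (2 * of_bool (k = m) + of_bool (k = m + 2 * g + 2)
          + of_bool (m = k + 2 * g + 2) + of_bool (k + m = 2 * g))))"
    unfolding integrand
    by (intro integral_unique has_integral_sum has_integral_mult_right has_integral_cos_sq_cos_cos) auto
  also have "\<dots> = pi / 4 * (\<Sum>k\<le>m + 2 * g. c k * (2 * of_bool (k = m) + of_bool (k = m + 2 * g + 2)
          + of_bool (m = k + 2 * g + 2) + of_bool (k + m = 2 * g)))"
    unfolding sum_distrib_left by (intro sum.cong) (auto simp: algebra_simps)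
  also have "\<dots> = pi / 4 * (2 * c m + (if m \<le> 2 * g then c (2 * g - m) else 0))"
  proof -
    have "c k = 0" if "m = k + 2 * g + 2" for k
      using that CC_eq_0[of k g m] CC_commute_34[of g g k m] by (simp add: c_def)
    then show ?thesis
      by (subst sum_cos_sq_cos_cos_weights) auto
  qed
  finally show ?thesis
    by (simp add: c_def algebra_simps)
qed

lemma dM_single_mode:
  assumes "weighted_summable \<eta>"
  shows "dM (\<lambda>j. if j = g then K else 0) \<eta> m = (om m)\<^sup>2 * \<eta> m
    - 3 * K\<^sup>2 / 8 * (2 * CC g g m m * \<eta> m + (if m \<le> 2 * g then CC g g (2 * g - m) m * \<eta> (2 * g - m) else 0))"
proof -
  have "weighted_summable (\<lambda>j. if j = g then K else 0)"
    by (rule weighted_summable_finite_support) (simp add: Collect_conv_if)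
  from dM_eq_trilin[OF this assms] show ?thesis
    unfolding integral_trilin_single_mode by simp
qed

definition mode_diag :: "nat \<Rightarrow> nat \<Rightarrow> real" where
  "mode_diag g m = (om m)\<^sup>2 * CC g g g g - 2 * (om g)\<^sup>2 * CC g g m m"

definition mode_coupling :: "nat \<Rightarrow> nat \<Rightarrow> real" where
  "mode_coupling g m = (om g)\<^sup>2 * CC g g (2 * g - m) m"

lemma mode_coupling_mirror: "n \<le> 2 * g \<Longrightarrow> mode_coupling g (2 * g - n) = mode_coupling g n"
  using CC_commute_34[of g g n] by (simp add: mode_coupling_def)

lemma mode_diag_ne_coupling: "mode_diag g g \<noteq> mode_coupling g g"
  using CC_pos[of g] by (simp add: mode_diag_def mode_coupling_def om_def)

lemma Dgn_eq: "Dgn g n = mode_diag g n * mode_diag g (2 * g - n) - (mode_coupling g n)\<^sup>2"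
  by (simp add: Dgn_def mode_diag_def mode_coupling_def CC_commute_23[of g "2 * g - n"])

lemma ker_dM_single_mode:
  assumes "s \<ge> 0" and K: "3 * K\<^sup>2 / 8 = (om g)\<^sup>2 / CC g g g g"
  shows "ker_dM s (\<lambda>j. if j = g then K else 0)
    = {\<eta> \<in> {\<eta>. l2s (s + 3) \<eta>}. solves_mirror_system g (mode_diag g) (mode_coupling g) \<eta>}"
proof -
  have "dM (\<lambda>j. if j = g then K else 0) \<eta> m = 0 \<longleftrightarrow>
      mode_diag g m * \<eta> m = (if m \<le> 2 * g then mode_coupling g m * \<eta> (2 * g - m) else 0)"
    if "l2s (s + 3) \<eta>" for \<eta> m
  proof -
    have "weighted_summable \<eta>"
      using weighted_summable_if_l2s[OF _ that] assms(1) by simp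
    then have "CC g g g g * dM (\<lambda>j. if j = g then K else 0) \<eta> m
        = mode_diag g m * \<eta> m - (if m \<le> 2 * g then mode_coupling g m * \<eta> (2 * g - m) else 0)"
      unfolding dM_single_mode[OF \<open>weighted_summable \<eta>\<close>] K mode_diag_def mode_coupling_def
      using CC_pos[of g] by (simp add: field_simps)
    with CC_pos[of g] show ?thesis
      by auto
  qed
  then show ?thesis
    unfolding ker_dM_def solves_mirror_system_def by (simp cong: conj_cong)
qed

theorem lemma7p1:
  fixes \<gamma> :: nat and s \<sigma> :: real and \<xi> :: "nat \<Rightarrow> real"
  assumes "s \<ge> 0"
    and "\<sigma> = 1 \<or> \<sigma> = -1"
    and "\<xi> = (\<lambda>m. if m = \<gamma> then \<sigma> * 2 * om \<gamma> * sqrt (2 / (3 * CC \<gamma> \<gamma> \<gamma> \<gamma>)) else 0)"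
  shows "ker_dM s \<xi> = {\<lambda>_. 0} \<longleftrightarrow>
           ((\<forall>m \<ge> 2 * \<gamma> + 1. (om m)\<^sup>2 * CC \<gamma> \<gamma> \<gamma> \<gamma> - 2 * (om \<gamma>)\<^sup>2 * CC \<gamma> \<gamma> m m \<noteq> 0)
            \<and> (\<forall>n < \<gamma>. Dgn \<gamma> n \<noteq> 0))"
proof -
  have "3 * (\<sigma> * 2 * om \<gamma> * sqrt (2 / (3 * CC \<gamma> \<gamma> \<gamma> \<gamma>)))\<^sup>2 / 8 = (om \<gamma>)\<^sup>2 / CC \<gamma> \<gamma> \<gamma> \<gamma>"
    using assms(2) CC_pos[of \<gamma>] by (auto simp: power_mult_distrib)
  from ker_dM_single_mode[OF assms(1) this] have ker:
    "ker_dM s \<xi> = {\<eta> \<in> {\<eta>. l2s (s + 3) \<eta>}. solves_mirror_system \<gamma> (mode_diag \<gamma>) (mode_coupling \<gamma>) \<eta>}"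
    unfolding assms(3) .
  have finite_support: "\<eta> \<in> {\<eta>. l2s (s + 3) \<eta>}" if "finite {i. \<eta> i \<noteq> 0}" for \<eta>
    using that by (simp add: l2s_finite_support)
  have "ker_dM s \<xi> = {\<lambda>_. 0} \<longleftrightarrow> (\<forall>m \<ge> 2 * \<gamma> + 1. mode_diag \<gamma> m \<noteq> 0)
      \<and> (\<forall>n < \<gamma>. mode_diag \<gamma> n * mode_diag \<gamma> (2 * \<gamma> - n) - (mode_coupling \<gamma> n)\<^sup>2 \<noteq> 0)"
    unfolding ker
    by (rule mirror_system_trivial_iff[where a = "mode_diag \<gamma>" and b = "mode_coupling \<gamma>",
          OF mode_coupling_mirror mode_diag_ne_coupling finite_support])
  then show ?thesis
    by (simp add: Dgn_eq mode_diag_def)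
qed

end
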